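(* Let $G$ be a group acting properly by isometries on a metric space $X$ and let $H\le G$. Suppose there exist a map $\phi\colon G\to G$, a constant $\theta\ge0$ and a point $x\in X$ such that (CQ1) for all $u,v\in G$, if $\phi(u)H=\phi(v)H$ then $d(\phi(u)x,\phi(v)x)\le\theta$; and (CQ2) for all $u\in G$, $d(ux,\phi(u)x)\le\theta$. Then $\omega_G=\omega_{G/H}$.
   Context: Proper means $B_G(x,r)=\{g\in G: d(x,gx)\le r\}$ is finite for all $x,r$. For $o\in X$: $\omega_G=\limsup_{r\to\infty}\frac1r\log|B_G(o,r)|$ and $\omega_{G/H}=\limsup_{r\to\infty}\frac1r\log|\mathcal L(B_G(o,r))|$, where $\mathcal L\colon G\to G/H$ is the natural map to left cosets; these do not depend on $o$. *)

theory Defs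
  imports "HOL-Algebra.Coset" "HOL-Analysis.Analysis"
begin

definition isometric_action :: "('g, 'm) monoid_scheme \<Rightarrow> ('g \<Rightarrow> 'x::metric_space \<Rightarrow> 'x) \<Rightarrow> bool" where
  "isometric_action G act \<longleftrightarrow>
     act \<one>\<^bsub>G\<^esub> = id \<and>
     (\<forall>g\<in>carrier G. \<forall>h\<in>carrier G. act (g \<otimes>\<^bsub>G\<^esub> h) = act g \<circ> act h) \<and>
     (\<forall>g\<in>carrier G. \<forall>y z. dist (act g y) (act g z) = dist y z)"

definition orbit_ball :: "('g, 'm) monoid_scheme \<Rightarrow> ('g \<Rightarrow> 'x::metric_space \<Rightarrow> 'x) \<Rightarrow> 'x \<Rightarrow> real \<Rightarrow> 'g set" where
  "orbit_ball G act x r = {g \<in> carrier G. dist x (act g x) \<le> r}"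

definition proper_action :: "('g, 'm) monoid_scheme \<Rightarrow> ('g \<Rightarrow> 'x::metric_space \<Rightarrow> 'x) \<Rightarrow> bool" where
  "proper_action G act \<longleftrightarrow> (\<forall>x r. finite (orbit_ball G act x r))"

definition growth_exp :: "(real \<Rightarrow> nat) \<Rightarrow> ereal" where
  "growth_exp f = Limsup at_top (\<lambda>r. ereal (ln (real (f r)) / r))"

definition omega_G :: "('g, 'm) monoid_scheme \<Rightarrow> ('g \<Rightarrow> 'x::metric_space \<Rightarrow> 'x) \<Rightarrow> 'x \<Rightarrow> ereal" where
  "omega_G G act p = growth_exp (\<lambda>r. card (orbit_ball G act p r))"

text \<open>cosets gH are the left cosets g <# H; the natural map L g = g <# H\<close>
definition omega_quot :: "('g, 'm) monoid_scheme \<Rightarrow> 'g set \<Rightarrow> ('g \<Rightarrow> 'x::metric_space \<Rightarrow> 'x) \<Rightarrow> 'x \<Rightarrow> ereal" where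
  "omega_quot G H act p = growth_exp (\<lambda>r. card ((\<lambda>g. g <#\<^bsub>G\<^esub> H) ` orbit_ball G act p r))"

end

theory Submission
  imports Defs
begin

text \<open>Up to the error \<open>\<theta>\<close>, \<open>\<phi>\<close> moves \<open>u\<close> to an element whose coset determines its orbit
  point. Hence all \<open>u\<close> in a ball with the same coset \<open>\<phi> u H\<close> have orbit points within \<open>3\<theta>\<close>
  of each other, so they lie in one translate of the finite ball \<open>B(x, 3\<theta>)\<close>, and
  \<open>|B(p,r)| \<le> K \<cdot> |\<L>(B(p, r + c))|\<close> with constants \<open>K, c\<close>. A constant factor and a constant
  shift of the radius do not change the exponential growth rate; the reverse inequality
  is trivial because \<open>\<L>\<close> can only decrease cardinalities.\<close>

lemma growth_exp_nonneg: "0 \<le> growth_exp f"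
proof -
  have ln_nonneg: "0 \<le> ln (real n)" for n :: nat
    by (cases "n = 0") auto
  have "\<forall>\<^sub>F r in at_top. 0 \<le> ereal (ln (real (f r)) / r)"
    using eventually_ge_at_top[of "0::real"]
    by eventually_elim (simp add: ln_nonneg)
  then have "0 \<le> Liminf at_top (\<lambda>r. ereal (ln (real (f r)) / r))"
    by (rule Liminf_bounded)
  also have "\<dots> \<le> growth_exp f"
    unfolding growth_exp_def by (rule Liminf_le_Limsup) simp
  finally show ?thesis .
qed

lemma ln_lt_of_le_mult_shift:
  fixes f g :: "real \<Rightarrow> nat" and K :: nat
  assumes "K \<ge> 1" "c \<ge> 0" "0 < y" "y < z"
    and g_bound: "\<forall>s\<ge>N. ln (real (g s)) < y * s"
    and le: "f r \<le> K * g (r + c)"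
    and r: "r \<ge> 1" "r + c \<ge> N" "r > (ln (real K) + y * c) / (z - y)"
  shows "ln (real (f r)) < z * r"
proof (cases "f r = 0")
  case True
  then show ?thesis using assms by simp
next
  case False
  with le have g_pos: "g (r + c) \<ge> 1"
    by (cases "g (r + c) = 0") auto
  have "ln (real (f r)) \<le> ln (real K * real (g (r + c)))"
    using le False \<open>K \<ge> 1\<close> g_pos by (subst ln_le_cancel_iff) (auto simp flip: of_nat_mult)
  also have "\<dots> = ln (real K) + ln (real (g (r + c)))"
    using \<open>K \<ge> 1\<close> g_pos by (simp add: ln_mult)
  also have "\<dots> < ln (real K) + y * (r + c)"
    using g_bound \<open>r + c \<ge> N\<close> by auto
  also have "\<dots> < z * r"
    using r \<open>y < z\<close> by (simp add: divide_less_eq algebra_simps)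
  finally show ?thesis .
qed

lemma growth_exp_le_shift:
  fixes f g :: "real \<Rightarrow> nat" and K :: nat
  assumes "K \<ge> 1" "c \<ge> 0" and le: "\<And>r. r \<ge> 0 \<Longrightarrow> f r \<le> K * g (r + c)"
  shows "growth_exp f \<le> growth_exp g"
proof -
  have *: "growth_exp f \<le> ereal z" if gz: "growth_exp g < ereal z" for z
  proof -
    obtain y where y: "growth_exp g < ereal y" "ereal y < ereal z"
      using ereal_dense2[OF gz] by blast
    have "(0::ereal) < ereal y"
      using growth_exp_nonneg y(1) by (rule le_less_trans)
    then have "0 < y" "y < z"
      using y(2) by simp_all
    have "\<forall>\<^sub>F s in at_top. ereal (ln (real (g s)) / s) < ereal y"
      using y(1) unfolding growth_exp_def by (rule Limsup_lessD)
    then obtain N0 where N0: "\<And>s. s \<ge> N0 \<Longrightarrow> ln (real (g s)) / s < y"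
      by (auto simp: eventually_at_top_linorder)
    define N where "N = max N0 1"
    have ln_g_lt: "\<forall>s\<ge>N. ln (real (g s)) < y * s"
      using N0 by (simp add: N_def divide_less_eq)
    define R where "R = max (max N 1) ((ln (real K) + y * c) / (z - y) + 1)"
    have "\<forall>\<^sub>F r in at_top. ereal (ln (real (f r)) / r) \<le> ereal z"
      using eventually_ge_at_top[of R]
    proof eventually_elim
      case (elim r)
      then have r: "r \<ge> 1" "r + c \<ge> N" "r > (ln (real K) + y * c) / (z - y)"
        using assms(2) by (auto simp: R_def)
      have "f r \<le> K * g (r + c)"
        using le r(1) by simp
      then have "ln (real (f r)) < z * r"
        by (rule ln_lt_of_le_mult_shift[OF assms(1,2) \<open>0 < y\<close> \<open>y < z\<close> ln_g_lt _ r])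
      then show ?case
        using r(1) by (simp add: divide_le_eq)
    qed
    then show ?thesis
      unfolding growth_exp_def by (rule Limsup_bounded)
  qed
  show ?thesis
  proof (rule ccontr)
    assume "\<not> ?thesis"
    then have "growth_exp g < growth_exp f"
      by simp
    then obtain z where "growth_exp g < ereal z" "ereal z < growth_exp f"
      using ereal_dense2 by blast
    then show False
      using * by (simp add: not_le[symmetric])
  qed
qed

lemma card_le_mult_card_of_fibres:
  assumes "finite B" "f ` A \<subseteq> B" and fibre: "\<And>b. b \<in> B \<Longrightarrow> card {a \<in> A. f a = b} \<le> K"
  shows "card A \<le> K * card B"
proof (cases "finite A")
  case True
  have "A = (\<Union>b\<in>B. {a \<in> A. f a = b})"
    using assms(2) by blast
  then have "card A \<le> (\<Sum>b\<in>B. card {a \<in> A. f a = b})"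
    using card_UN_le[OF \<open>finite B\<close>] by metis
  also have "\<dots> \<le> (\<Sum>b\<in>B. K)"
    by (rule sum_mono[OF fibre])
  finally show ?thesis
    by (simp add: mult.commute)
qed simp

locale isometric_group_action = group G
  for G :: "('g, 'm) monoid_scheme" (structure) and act :: "'g \<Rightarrow> 'x::metric_space \<Rightarrow> 'x" +
  assumes isometric_action: "isometric_action G act"
begin

lemma act_one [simp]: "act \<one> y = y"
  using isometric_action by (simp add: isometric_action_def)

lemma act_mult: "g \<in> carrier G \<Longrightarrow> h \<in> carrier G \<Longrightarrow> act (g \<otimes> h) y = act g (act h y)"
  using isometric_action by (simp add: isometric_action_def)

lemma dist_act [simp]: "g \<in> carrier G \<Longrightarrow> dist (act g y) (act g z) = dist y z"
  using isometric_action by (simp add: isometric_action_def)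

lemma orbit_ball_change_basepoint:
  "orbit_ball G act p s \<subseteq> orbit_ball G act q (s + 2 * dist p q)"
proof
  fix g assume "g \<in> orbit_ball G act p s"
  then have g: "g \<in> carrier G" "dist p (act g p) \<le> s"
    by (auto simp: orbit_ball_def)
  have "dist q (act g q) \<le> dist q p + dist p (act g p) + dist (act g p) (act g q)"
    by (meson dist_triangle order_trans add_right_mono)
  also have "\<dots> \<le> s + 2 * dist p q"
    using g by (simp add: dist_commute)
  finally show "g \<in> orbit_ball G act q (s + 2 * dist p q)"
    using g by (simp add: orbit_ball_def)
qed

lemma card_le_card_orbit_ball_of_diameter:
  assumes "finite (orbit_ball G act x R)" "A \<subseteq> carrier G"
    and diam: "\<And>u v. u \<in> A \<Longrightarrow> v \<in> A \<Longrightarrow> dist (act u x) (act v x) \<le> R"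
  shows "card A \<le> card (orbit_ball G act x R)"
proof (cases "A = {}")
  case False
  then obtain v where v: "v \<in> A" by blast
  then have v_carrier: "v \<in> carrier G" using assms(2) by blast
  have "A \<subseteq> (\<otimes>) v ` orbit_ball G act x R"
  proof
    fix u assume u: "u \<in> A"
    then have u_carrier: "u \<in> carrier G" using assms(2) by blast
    define k where "k = inv v \<otimes> u"
    have k: "k \<in> carrier G" "v \<otimes> k = u"
      using u_carrier v_carrier by (simp_all add: k_def m_assoc[symmetric])
    have "dist x (act k x) = dist (act v x) (act u x)"
      using act_mult[OF v_carrier k(1)] k v_carrier by simp
    then have "k \<in> orbit_ball G act x R"
      using diam[OF v u] k(1) by (simp add: orbit_ball_def)
    then show "u \<in> (\<otimes>) v ` orbit_ball G act x R"
      using k(2) by force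
  qed
  then have "card A \<le> card ((\<otimes>) v ` orbit_ball G act x R)"
    using assms(1) by (intro card_mono) auto
  also have "\<dots> \<le> card (orbit_ball G act x R)"
    by (rule card_image_le[OF assms(1)])
  finally show ?thesis .
qed simp

lemma card_orbit_ball_le_card_cosets:
  fixes \<phi> :: "'g \<Rightarrow> 'g"
  assumes proper: "proper_action G act" and \<phi>: "\<phi> \<in> carrier G \<rightarrow> carrier G"
    and CQ1: "\<And>u v. u \<in> carrier G \<Longrightarrow> v \<in> carrier G \<Longrightarrow>
              \<phi> u <#\<^bsub>G\<^esub> H = \<phi> v <#\<^bsub>G\<^esub> H \<Longrightarrow> dist (act (\<phi> u) x) (act (\<phi> v) x) \<le> \<theta>"
    and CQ2: "\<And>u. u \<in> carrier G \<Longrightarrow> dist (act u x) (act (\<phi> u) x) \<le> \<theta>"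
  shows "card (orbit_ball G act p r) \<le> card (orbit_ball G act x (3 * \<theta>)) *
           card ((\<lambda>g. g <#\<^bsub>G\<^esub> H) ` orbit_ball G act p (r + 4 * dist p x + \<theta>))"
proof (rule card_le_mult_card_of_fibres)
  have finite_ball: "finite (orbit_ball G act q s)" for q s
    using proper by (simp add: proper_action_def)
  then show "finite ((\<lambda>g. g <#\<^bsub>G\<^esub> H) ` orbit_ball G act p (r + 4 * dist p x + \<theta>))"
    by simp
  show "(\<lambda>u. \<phi> u <#\<^bsub>G\<^esub> H) ` orbit_ball G act p r \<subseteq>
          (\<lambda>g. g <#\<^bsub>G\<^esub> H) ` orbit_ball G act p (r + 4 * dist p x + \<theta>)"
  proof (rule image_subsetI)
    fix u assume "u \<in> orbit_ball G act p r"
    then have u: "u \<in> carrier G" "dist x (act u x) \<le> r + 2 * dist p x"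
      using orbit_ball_change_basepoint[of p r x] by (auto simp: orbit_ball_def)
    have "dist x (act (\<phi> u) x) \<le> dist x (act u x) + dist (act u x) (act (\<phi> u) x)"
      by (rule dist_triangle)
    then have "\<phi> u \<in> orbit_ball G act x (r + 2 * dist p x + \<theta>)"
      using u CQ2[OF u(1)] \<phi> by (auto simp: orbit_ball_def)
    then have "\<phi> u \<in> orbit_ball G act p (r + 4 * dist p x + \<theta>)"
      using orbit_ball_change_basepoint[of x "r + 2 * dist p x + \<theta>" p]
      by (auto simp: dist_commute algebra_simps)
    then show "\<phi> u <#\<^bsub>G\<^esub> H \<in> (\<lambda>g. g <#\<^bsub>G\<^esub> H) ` orbit_ball G act p (r + 4 * dist p x + \<theta>)"
      by blast
  qed
  fix C
  show "card {u \<in> orbit_ball G act p r. \<phi> u <#\<^bsub>G\<^esub> H = C} \<le> card (orbit_ball G act x (3 * \<theta>))"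
    (is "card ?fibre \<le> _")
  proof (rule card_le_card_orbit_ball_of_diameter[OF finite_ball])
    show "?fibre \<subseteq> carrier G"
      by (auto simp: orbit_ball_def)
    fix u v assume "u \<in> ?fibre" "v \<in> ?fibre"
    then have uv: "u \<in> carrier G" "v \<in> carrier G" "\<phi> u <#\<^bsub>G\<^esub> H = \<phi> v <#\<^bsub>G\<^esub> H"
      by (auto simp: orbit_ball_def)
    have "dist (act u x) (act v x) \<le>
          dist (act u x) (act (\<phi> u) x) + dist (act (\<phi> u) x) (act (\<phi> v) x) + dist (act (\<phi> v) x) (act v x)"
      by (meson dist_triangle order_trans add_right_mono)
    also have "\<dots> \<le> 3 * \<theta>"
      using CQ2[OF uv(1)] CQ2[OF uv(2)] CQ1[OF uv] by (simp add: dist_commute)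
    finally show "dist (act u x) (act v x) \<le> 3 * \<theta>" .
  qed
qed

end

theorem mainTheorem7:
  fixes G :: "('g, 'm) monoid_scheme" and act :: "'g \<Rightarrow> 'x::metric_space \<Rightarrow> 'x"
    and H :: "'g set" and \<phi> :: "'g \<Rightarrow> 'g" and \<theta> :: real and x p :: 'x
  assumes "group G"
    and "isometric_action G act"
    and "proper_action G act"
    and "subgroup H G"
    and "\<phi> \<in> carrier G \<rightarrow> carrier G"
    and "\<theta> \<ge> 0"
    and CQ1: "\<And>u v. u \<in> carrier G \<Longrightarrow> v \<in> carrier G \<Longrightarrow>
              \<phi> u <#\<^bsub>G\<^esub> H = \<phi> v <#\<^bsub>G\<^esub> H \<Longrightarrow> dist (act (\<phi> u) x) (act (\<phi> v) x) \<le> \<theta>"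
    and CQ2: "\<And>u. u \<in> carrier G \<Longrightarrow> dist (act u x) (act (\<phi> u) x) \<le> \<theta>"
  shows "omega_G G act p = omega_quot G H act p"
proof -
  interpret isometric_group_action G act
    by (intro isometric_group_action.intro isometric_group_action_axioms.intro assms(1,2))
  have finite_ball: "finite (orbit_ball G act q s)" for q s
    using assms(3) by (simp add: proper_action_def)
  have "\<one>\<^bsub>G\<^esub> \<in> orbit_ball G act x (3 * \<theta>)"
    using \<open>\<theta> \<ge> 0\<close> by (simp add: orbit_ball_def)
  then have "card (orbit_ball G act x (3 * \<theta>)) \<ge> 1"
    using finite_ball[of x "3 * \<theta>"] by (metis card_0_eq empty_iff less_one not_le)
  then have "omega_G G act p \<le> omega_quot G H act p"
    unfolding omega_G_def omega_quot_def
  proof (rule growth_exp_le_shift)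
    show "0 \<le> 4 * dist p x + \<theta>"
      using \<open>\<theta> \<ge> 0\<close> by simp
    show "card (orbit_ball G act p r) \<le> card (orbit_ball G act x (3 * \<theta>)) *
            card ((\<lambda>g. g <#\<^bsub>G\<^esub> H) ` orbit_ball G act p (r + (4 * dist p x + \<theta>)))" for r
      using card_orbit_ball_le_card_cosets[OF assms(3,5) CQ1 CQ2] by (simp add: add.assoc)
  qed
  moreover have "omega_quot G H act p \<le> omega_G G act p"
    unfolding omega_G_def omega_quot_def
  proof (rule growth_exp_le_shift[of 1 0])
    show "card ((\<lambda>g. g <#\<^bsub>G\<^esub> H) ` orbit_ball G act p r) \<le> 1 * card (orbit_ball G act p (r + 0))" for r
      using card_image_le[OF finite_ball] by simp
  qed simp_all
  ultimately show ?thesis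
    by simp
qed

end
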